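(* For every prime $p$, every integer $t\ge 1$ and every integer $k$ with $1\le k\le p^t$, \[ \overline{M}_k(p^t)=\sum_{j=1}^{p^t} f_k\!\left(\left\lfloor \frac{p^t}{j}\right\rfloor\right)-\sum_{j=1}^{p^{t-1}} f_k\!\left(\left\lfloor \frac{p^{t-1}}{j}\right\rfloor\right)+(p-1)\sum_{s=1}^{t}p^{s-1}\sum_{m=1}^{p^{t-s}} f_k\!\left(\left\lfloor \frac{p^t}{1+(m-1)p^s}\right\rfloor\right). \]
   Context: For a nonempty finite set $A$ of positive integers, $(A)$ denotes the greatest common divisor of the elements of $A$. For $m,k\in\mathbb{N}$, $f_k(m)$ is the number of $k$-element subsets $A\subseteq\{1,2,\ldots,m\}$ with $(A)=1$ (so $f_k(m)=0$ if $m<k$). For $1\le k\le n$, \[ \overline{M}_k(n)=\sum_{\substack{A\subseteq\{1,\ldots,n\},\ \#A=k\\ \gcd((A),n)=1}}\gcd((A)-1,n), \] with the convention $\gcd(0,n)=n$. *)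

theory Defs
  imports "HOL-Computational_Algebra.Primes"
begin

definition f :: "nat \<Rightarrow> nat \<Rightarrow> nat" where
  "f k m = card {A. A \<subseteq> {1..m} \<and> card A = k \<and> Gcd A = 1}"

text \<open>Mbar k n: sum over k-subsets A of {1..n} with gcd(Gcd A, n) = 1 of gcd(Gcd A - 1, n).
  Since Gcd A \<ge> 1 for nonempty A, the natural-number subtraction is exact; gcd 0 n = n.\<close>
definition Mbar :: "nat \<Rightarrow> nat \<Rightarrow> nat" where
  "Mbar k n = (\<Sum>A\<in>{A. A \<subseteq> {1..n} \<and> card A = k \<and> coprime (Gcd A) n}. gcd (Gcd A - 1) n)"

end

theory Submission
  imports Defs
begin

text \<open>Grouping the k-subsets A of {1..n} by d = Gcd A and dividing A by d, the number of
  subsets with gcd d is f k (n div d), so Mbar k n is the sum over d of the weight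
  coprime_weight n d times f k (n div d). For n = p^t the weight is
  [p \<nmid> d] + (p - 1) \<Sum>s. p^(s-1) [p^s | d - 1], because gcd x (p^t) grows by the factor p
  at each s with p^s | x. Interchanging the sums, the first term counts all d minus the
  multiples d = p j, and the term for s runs over the residue class d = 1 + (m - 1) p^s.\<close>

definition coprime_weight :: "nat \<Rightarrow> nat \<Rightarrow> nat" where
  "coprime_weight n d = (if coprime d n then gcd (d - 1) n else 0)"

lemma subsets_Gcd_eq_image:
  fixes d n k :: nat
  assumes "d > 0"
  shows "{A. A \<subseteq> {1..n} \<and> card A = k \<and> Gcd A = d}
       = (\<lambda>B. (*) d ` B) ` {B. B \<subseteq> {1..n div d} \<and> card B = k \<and> Gcd B = 1}"
proof (intro set_eqI iffI)
  fix A assume A: "A \<in> {A. A \<subseteq> {1..n} \<and> card A = k \<and> Gcd A = d}"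
  define B where "B = (\<lambda>x. x div d) ` A"
  have dvd: "d dvd x" if "x \<in> A" for x
    using A Gcd_dvd[OF that] by simp
  have A_eq: "A = (*) d ` B"
    unfolding B_def image_image using dvd by (force simp: image_iff)
  have "B \<subseteq> {1..n div d}"
  proof
    fix y assume "y \<in> B"
    then obtain x where x: "x \<in> A" "y = x div d"
      by (auto simp: B_def)
    then have "x \<in> {1..n}" "d dvd x"
      using A dvd by auto
    then show "y \<in> {1..n div d}"
      using x \<open>d > 0\<close> by (auto simp: div_le_mono elim!: dvdE)
  qed
  moreover have "card B = k"
    using A \<open>d > 0\<close> by (simp add: A_eq card_image inj_on_def)
  moreover have "Gcd B = 1"
    using A \<open>d > 0\<close> by (simp add: A_eq Gcd_mult)
  ultimately have "B \<in> {B. B \<subseteq> {1..n div d} \<and> card B = k \<and> Gcd B = 1}"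
    by blast
  then show "A \<in> (\<lambda>B. (*) d ` B) ` {B. B \<subseteq> {1..n div d} \<and> card B = k \<and> Gcd B = 1}"
    unfolding A_eq by (rule imageI)
next
  fix A assume "A \<in> (\<lambda>B. (*) d ` B) ` {B. B \<subseteq> {1..n div d} \<and> card B = k \<and> Gcd B = 1}"
  then obtain B where B: "B \<subseteq> {1..n div d}" "card B = k" "Gcd B = 1" and A_eq: "A = (*) d ` B"
    by blast
  have "d * y \<le> n" if "y \<le> n div d" for y
    using that by (meson le_trans mult_le_mono2 times_div_less_eq_dividend)
  then have "A \<subseteq> {1..n}"
    using B \<open>d > 0\<close> by (auto simp: A_eq)
  moreover have "card A = k" "Gcd A = d"
    using B \<open>d > 0\<close> by (simp_all add: A_eq card_image inj_on_def Gcd_mult)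
  ultimately show "A \<in> {A. A \<subseteq> {1..n} \<and> card A = k \<and> Gcd A = d}"
    by blast
qed

lemma card_subsets_Gcd_eq:
  fixes d n k :: nat
  assumes "d > 0"
  shows "card {A. A \<subseteq> {1..n} \<and> card A = k \<and> Gcd A = d} = f k (n div d)"
proof -
  have "inj_on (\<lambda>B. (*) d ` B) X" for X :: "nat set set"
    using assms by (intro inj_onI) (simp add: inj_image_eq_iff inj_on_def)
  then show ?thesis
    unfolding subsets_Gcd_eq_image[OF assms] f_def by (rule card_image)
qed

lemma sum_subsets_by_Gcd:
  fixes g :: "nat \<Rightarrow> 'a :: comm_semiring_1"
  assumes "k > 0"
  shows "(\<Sum>A\<in>{A. A \<subseteq> {1..n} \<and> card A = k}. g (Gcd A))
       = (\<Sum>d=1..n. g d * of_nat (f k (n div d)))"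
proof -
  let ?S = "{A. A \<subseteq> {1..n} \<and> card A = k}"
  have fin: "finite ?S"
    by (rule finite_subset[of _ "Pow {1..n}"]) auto
  have "Gcd A \<in> {1..n}" if A: "A \<in> ?S" for A
  proof -
    obtain a where a: "a \<in> A"
      using A assms by fastforce
    then have "a \<in> {1..n}" "Gcd A dvd a"
      using A by auto
    then show ?thesis
      by (auto dest: dvd_imp_le)
  qed
  then have "(\<Sum>A\<in>?S. g (Gcd A)) = (\<Sum>d=1..n. \<Sum>A\<in>{A \<in> ?S. Gcd A = d}. g (Gcd A))"
    by (intro sum.group[OF fin, symmetric]) auto
  also have "\<dots> = (\<Sum>d=1..n. g d * of_nat (f k (n div d)))"
  proof (rule sum.cong[OF refl])
    fix d assume "d \<in> {1..n}"
    then have card: "card {A \<in> ?S. Gcd A = d} = f k (n div d)"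
      using card_subsets_Gcd_eq[of d n k] by (simp add: conj_assoc)
    have "(\<Sum>A\<in>{A \<in> ?S. Gcd A = d}. g (Gcd A)) = (\<Sum>A\<in>{A \<in> ?S. Gcd A = d}. g d)"
      by (rule sum.cong) auto
    then show "(\<Sum>A\<in>{A \<in> ?S. Gcd A = d}. g (Gcd A)) = g d * of_nat (f k (n div d))"
      by (simp only: sum_constant card mult_of_nat_commute)
  qed
  finally show ?thesis .
qed

lemma Mbar_eq_sum_coprime_weight:
  assumes "k > 0"
  shows "Mbar k n = (\<Sum>d=1..n. coprime_weight n d * f k (n div d))"
proof -
  let ?S = "{A. A \<subseteq> {1..n} \<and> card A = k}"
  have "finite ?S"
    by (rule finite_subset[of _ "Pow {1..n}"]) auto
  have "Mbar k n = (\<Sum>A\<in>{A \<in> ?S. coprime (Gcd A) n}. gcd (Gcd A - 1) n)"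
    unfolding Mbar_def by (rule sum.cong) auto
  also have "\<dots> = (\<Sum>A\<in>?S. coprime_weight n (Gcd A))"
    unfolding coprime_weight_def by (rule sum.inter_filter[OF \<open>finite ?S\<close>])
  also have "\<dots> = (\<Sum>d=1..n. coprime_weight n d * f k (n div d))"
    by (rule sum_subsets_by_Gcd[OF assms, where g = "coprime_weight n", unfolded of_nat_id])
  finally show ?thesis .
qed

lemma sum_over_multiples:
  fixes F :: "nat \<Rightarrow> 'a :: comm_monoid_add"
  assumes "q > 0"
  shows "(\<Sum>d=1..q * N. if q dvd d then F d else 0) = (\<Sum>j=1..N. F (q * j))"
proof -
  have "{d \<in> {1..q * N}. q dvd d} = (*) q ` {1..N}"
    using assms by (auto elim!: dvdE intro!: imageI)
  then show ?thesis
    using assms by (simp add: sum.inter_filter[symmetric] sum.reindex inj_on_def)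
qed

lemma sum_over_residue_one:
  fixes F :: "nat \<Rightarrow> 'a :: comm_monoid_add"
  assumes "q > 0"
  shows "(\<Sum>d=1..N * q. if q dvd d - 1 then F d else 0) = (\<Sum>m=1..N. F (1 + (m - 1) * q))"
proof -
  have "{d \<in> {1..N * q}. q dvd d - 1} = (\<lambda>m. 1 + (m - 1) * q) ` {1..N}"
  proof (intro set_eqI iffI)
    fix d assume "d \<in> {d \<in> {1..N * q}. q dvd d - 1}"
    then have d: "1 \<le> d" "d \<le> N * q" "q dvd d - 1"
      by auto
    then obtain c where "d - 1 = q * c"
      by (elim dvdE)
    then have c: "d = 1 + c * q"
      using d(1) by (simp add: mult.commute)
    then have "c * q < N * q"
      using d(2) by linarith
    then have "c < N"
      by simp
    then show "d \<in> (\<lambda>m. 1 + (m - 1) * q) ` {1..N}"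
      using c by (intro image_eqI[of _ _ "c + 1"]) auto
  next
    fix d assume "d \<in> (\<lambda>m. 1 + (m - 1) * q) ` {1..N}"
    then obtain m where m: "d = 1 + (m - 1) * q" "m \<in> {1..N}"
      by blast
    then have "(m - 1) * q + q \<le> N * q"
      by (metis add_mult_distrib atLeastAtMost_iff le_add_diff_inverse2 mult_1 mult_le_mono1)
    then show "d \<in> {d \<in> {1..N * q}. q dvd d - 1}"
      using m assms by auto
  qed
  moreover have "inj_on (\<lambda>m. 1 + (m - 1) * q) {1..N}"
    using assms by (auto simp: inj_on_def)
  ultimately show ?thesis
    by (simp add: sum.inter_filter[symmetric] sum.reindex)
qed

lemma gcd_prime_power_Suc:
  fixes p x :: nat
  assumes "prime p"
  shows "gcd x (p ^ Suc t) = (if p ^ Suc t dvd x then p ^ Suc t else gcd x (p ^ t))"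
proof (cases "p ^ Suc t dvd x")
  case False
  obtain i where i: "i \<le> Suc t" "gcd x (p ^ Suc t) = p ^ i"
    using divides_primepow_nat[OF assms, of "gcd x (p ^ Suc t)" "Suc t"] by auto
  with False have "i \<le> t"
    by (metis gcd_dvd1 le_Suc_eq)
  then have "gcd x (p ^ Suc t) dvd gcd x (p ^ t)"
    using i by (metis gcd_dvd1 gcd_greatest le_imp_power_dvd)
  moreover have "gcd x (p ^ t) dvd gcd x (p ^ Suc t)"
    by (simp add: gcd_mono le_imp_power_dvd)
  ultimately have "gcd x (p ^ Suc t) = gcd x (p ^ t)"
    by (rule dvd_antisym)
  with False show ?thesis
    by simp
qed (simp add: gcd_nat.absorb2)

lemma gcd_prime_power_eq:
  fixes p x :: nat
  assumes "prime p"
  shows "gcd x (p ^ t) = 1 + (p - 1) * (\<Sum>s=1..t. p ^ (s - 1) * (if p ^ s dvd x then 1 else 0))"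
proof (induction t)
  case (Suc t)
  show ?case
  proof (cases "p ^ Suc t dvd x")
    case True
    then have "p ^ t dvd x"
      using dvd_trans[OF le_imp_power_dvd[of t "Suc t" p] True] by simp
    then have "gcd x (p ^ t) = p ^ t"
      by (simp add: gcd_nat.absorb2)
    moreover have "p ^ Suc t = p ^ t + (p - 1) * p ^ t"
      using prime_gt_0_nat[OF assms] by (simp add: diff_mult_distrib)
    ultimately show ?thesis
      using Suc.IH True gcd_prime_power_Suc[OF assms, of x t] by (simp add: sum.cl_ivl_Suc add_mult_distrib2)
  next
    case False
    then show ?thesis
      using Suc.IH gcd_prime_power_Suc[OF assms, of x t] by (simp add: sum.cl_ivl_Suc)
  qed
qed simp

lemma coprime_weight_prime_power:
  fixes p t d :: nat
  assumes "prime p" and "t > 0" and "d > 0"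
  shows "coprime_weight (p ^ t) d
       = (if p dvd d then 0 else 1)
         + (p - 1) * (\<Sum>s=1..t. p ^ (s - 1) * (if p ^ s dvd d - 1 then 1 else 0))"
proof (cases "p dvd d")
  case True
  then have "\<not> coprime d p"
    using assms(1) by (metis coprime_common_divisor dvd_refl not_prime_unit)
  then have "\<not> coprime d (p ^ t)"
    using assms(2) by simp
  moreover have "\<not> p ^ s dvd d - 1" if "s > 0" for s
  proof
    assume "p ^ s dvd d - 1"
    then have "p dvd d - 1"
      using that dvd_power dvd_trans by blast
    with True have "p dvd d - (d - 1)"
      by (simp add: dvd_diff_nat)
    with assms show False
      by simp
  qed
  ultimately show ?thesis
    using True by (simp add: coprime_weight_def)
next
  case False
  then have "coprime d (p ^ t)"
    using prime_imp_coprime[OF assms(1) False] assms(2) by (simp add: coprime_commute)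
  then show ?thesis
    using False gcd_prime_power_eq[OF assms(1), of "d - 1" t] by (simp add: coprime_weight_def)
qed

lemma sum_prime_power_weights:
  fixes F :: "nat \<Rightarrow> 'a :: comm_ring_1"
  assumes "p > 0" and "t > 0"
  shows "(\<Sum>d=1..p ^ t. of_nat ((if p dvd d then 0 else 1)
            + (p - 1) * (\<Sum>s=1..t. p ^ (s - 1) * (if p ^ s dvd d - 1 then 1 else 0))) * F d)
       = (\<Sum>d=1..p ^ t. F d) - (\<Sum>j=1..p ^ (t - 1). F (p * j))
         + of_nat (p - 1) * (\<Sum>s=1..t. of_nat (p ^ (s - 1)) *
              (\<Sum>m=1..p ^ (t - s). F (1 + (m - 1) * p ^ s)))"
proof -
  have indicator: "of_nat (if P then 1 else 0) * x = (if P then x else 0)" for P and x :: 'a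
    by simp
  have "of_nat ((if p dvd d then 0 else 1)
            + (p - 1) * (\<Sum>s=1..t. p ^ (s - 1) * (if p ^ s dvd d - 1 then 1 else 0))) * F d
      = (if p dvd d then 0 else F d)
        + of_nat (p - 1) * (\<Sum>s=1..t. of_nat (p ^ (s - 1)) * (if p ^ s dvd d - 1 then F d else 0))"
    for d
    by (simp add: distrib_right sum_distrib_right mult.assoc of_nat_sum indicator)
  then have "(\<Sum>d=1..p ^ t. of_nat ((if p dvd d then 0 else 1)
            + (p - 1) * (\<Sum>s=1..t. p ^ (s - 1) * (if p ^ s dvd d - 1 then 1 else 0))) * F d)
      = (\<Sum>d=1..p ^ t. (if p dvd d then 0 else F d))
        + of_nat (p - 1) * (\<Sum>s=1..t. of_nat (p ^ (s - 1)) *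
            (\<Sum>d=1..p ^ t. if p ^ s dvd d - 1 then F d else 0))"
    by (simp add: sum.distrib sum_distrib_left) (rule sum.swap)
  also have "(\<Sum>d=1..p ^ t. (if p dvd d then 0 else F d))
      = (\<Sum>d=1..p ^ t. F d) - (\<Sum>d=1..p ^ t. if p dvd d then F d else 0)"
    by (simp add: sum_subtractf[symmetric] if_distrib cong: if_cong)
  also have "(\<Sum>d=1..p ^ t. if p dvd d then F d else 0) = (\<Sum>j=1..p ^ (t - 1). F (p * j))"
  proof -
    have "p ^ t = p * p ^ (t - 1)"
      using \<open>t > 0\<close> by (cases t) simp_all
    then show ?thesis
      using sum_over_multiples[OF \<open>p > 0\<close>, of F "p ^ (t - 1)"] by simp
  qed
  also have "(\<Sum>s=1..t. of_nat (p ^ (s - 1)) * (\<Sum>d=1..p ^ t. if p ^ s dvd d - 1 then F d else 0))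
      = (\<Sum>s=1..t. of_nat (p ^ (s - 1)) * (\<Sum>m=1..p ^ (t - s). F (1 + (m - 1) * p ^ s)))"
  proof (rule sum.cong[OF refl])
    fix s assume "s \<in> {1..t}"
    then have "p ^ t = p ^ (t - s) * p ^ s"
      by (simp flip: power_add)
    then show "of_nat (p ^ (s - 1)) * (\<Sum>d=1..p ^ t. if p ^ s dvd d - 1 then F d else 0)
        = of_nat (p ^ (s - 1)) * (\<Sum>m=1..p ^ (t - s). F (1 + (m - 1) * p ^ s))"
      using sum_over_residue_one[of "p ^ s" F "p ^ (t - s)"] \<open>p > 0\<close> by simp
  qed
  finally show ?thesis .
qed

theorem mainTheorem4:
  fixes p t k :: nat
  assumes "prime p" and "t \<ge> 1" and "1 \<le> k" and "k \<le> p ^ t"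
  shows "int (Mbar k (p ^ t)) =
           (\<Sum>j=1..p ^ t. int (f k (p ^ t div j)))
         - (\<Sum>j=1..p ^ (t - 1). int (f k (p ^ (t - 1) div j)))
         + int (p - 1) * (\<Sum>s=1..t. int (p ^ (s - 1)) *
              (\<Sum>m=1..p ^ (t - s). int (f k (p ^ t div (1 + (m - 1) * p ^ s)))))"
proof -
  define F where "F d = int (f k (p ^ t div d))" for d
  have "p > 0" "t > 0" "k > 0"
    using assms prime_gt_0_nat by auto
  have "int (Mbar k (p ^ t)) = (\<Sum>d=1..p ^ t. int (coprime_weight (p ^ t) d) * F d)"
    unfolding Mbar_eq_sum_coprime_weight[OF \<open>k > 0\<close>] F_def by simp
  also have "\<dots> = (\<Sum>d=1..p ^ t. of_nat ((if p dvd d then 0 else 1)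
            + (p - 1) * (\<Sum>s=1..t. p ^ (s - 1) * (if p ^ s dvd d - 1 then 1 else 0))) * F d)"
    using coprime_weight_prime_power[OF assms(1) \<open>t > 0\<close>] by (intro sum.cong) auto
  also have "\<dots> = (\<Sum>d=1..p ^ t. F d) - (\<Sum>j=1..p ^ (t - 1). F (p * j))
         + of_nat (p - 1) * (\<Sum>s=1..t. of_nat (p ^ (s - 1)) *
              (\<Sum>m=1..p ^ (t - s). F (1 + (m - 1) * p ^ s)))"
    by (rule sum_prime_power_weights[OF \<open>p > 0\<close> \<open>t > 0\<close>])
  also have "(\<Sum>j=1..p ^ (t - 1). F (p * j)) = (\<Sum>j=1..p ^ (t - 1). int (f k (p ^ (t - 1) div j)))"
    using \<open>p > 0\<close> \<open>t > 0\<close> by (simp add: F_def div_mult2_eq power_diff)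
  finally show ?thesis
    unfolding F_def by simp
qed
end
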